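(* If $X$ is a GO-space and $E$ is a countable metrizable space, then $E\times X$ is $C$-selective.
   Context: All spaces are assumed $T_1$. A GO-space (generalized ordered space) is a linearly ordered set with a topology finer than the order topology that has a base of order-convex sets. For spaces $Y$, $X$, a map $\varphi:Y\to\mathcal P(X)\setminus\{\emptyset\}$ is lower semicontinuous (l.s.c.) if $\{y:\varphi(y)\cap U\neq\emptyset\}$ is open in $Y$ for every open $U\subseteq X$; a selection is a map $f:Y\to X$ with $f(y)\in\varphi(y)$ for all $y$. $X$ is $Y$-selective if every l.s.c. map from $Y$ to the nonempty closed subsets of $X$ has a continuous selection; $X$ is $C$-selective if it is $Y$-selective for every countable regular space $Y$. *)

theory Defs
  imports "HOL-Analysis.Analysis"
begin

definition order_convex_in :: "'a::linorder set \<Rightarrow> 'a set \<Rightarrow> bool" where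
  "order_convex_in S V \<longleftrightarrow> V \<subseteq> S \<and>
     (\<forall>a\<in>V. \<forall>b\<in>V. \<forall>c\<in>S. a \<le> c \<and> c \<le> b \<longrightarrow> c \<in> V)"

text \<open>T1 is part of the standing convention.\<close>
definition GO_space :: "'a::linorder topology \<Rightarrow> bool" where
  "GO_space X \<longleftrightarrow> t1_space X \<and>
     (\<forall>a\<in>topspace X. openin X {x\<in>topspace X. x < a} \<and> openin X {x\<in>topspace X. a < x}) \<and>
     (\<forall>U x. openin X U \<and> x \<in> U \<longrightarrow>
        (\<exists>V. openin X V \<and> order_convex_in (topspace X) V \<and> x \<in> V \<and> V \<subseteq> U))"

definition lsc_closed_valued :: "'b topology \<Rightarrow> 'c topology \<Rightarrow> ('b \<Rightarrow> 'c set) \<Rightarrow> bool" where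
  "lsc_closed_valued Y X \<phi> \<longleftrightarrow>
     (\<forall>y\<in>topspace Y. \<phi> y \<noteq> {} \<and> closedin X (\<phi> y)) \<and>
     (\<forall>U. openin X U \<longrightarrow> openin Y {y\<in>topspace Y. \<phi> y \<inter> U \<noteq> {}})"

definition Y_selective :: "'b topology \<Rightarrow> 'c topology \<Rightarrow> bool" where
  "Y_selective Y X \<longleftrightarrow>
     (\<forall>\<phi>. lsc_closed_valued Y X \<phi> \<longrightarrow>
        (\<exists>f. continuous_map Y X f \<and> (\<forall>y\<in>topspace Y. f y \<in> \<phi> y)))"

text \<open>Every countable
  space is homeomorphic to a space whose carrier is a subset of nat, and Y-selectivity is
  invariant under homeomorphism, so we quantify over topologies on nat.\<close>
definition C_selective :: "'c topology \<Rightarrow> bool" where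
  "C_selective X \<longleftrightarrow>
     (\<forall>Y :: nat topology. countable (topspace Y) \<and> regular_space Y \<and> t1_space Y
        \<longrightarrow> Y_selective Y X)"

end

theory Submission
  imports Defs
begin

(* A point t of the GO-space X whose left ray has uncountable cofinality is made isolated
   from the left, and dually on the right. On every side that is kept, t has a countable
   neighbourhood base in X, so the refined space X' is first countable, and so is E x X'.
   An l.s.c. closed-valued map phi from a countable Y into E x X stays l.s.c. into E x X':
   each of the countably many closed slices {s. (e, s) in phi y} that miss t misses some
   interval (a, t), and uncountable cofinality provides a single b < t below all these a.
   Countable regular spaces are zero-dimensional, and an l.s.c. map from a countable
   zero-dimensional T1 space into a first-countable space has a continuous selection; it
   remains continuous into the coarser E x X. *)

section \<open>Refining a GO-space at points of uncountable cofinality\<close>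

definition uncountable_cof_below :: "'a::linorder set \<Rightarrow> 'a \<Rightarrow> bool" where
  "uncountable_cof_below S t \<longleftrightarrow>
     (\<forall>A. countable A \<and> A \<subseteq> {a\<in>S. a < t} \<longrightarrow> (\<exists>b\<in>S. b < t \<and> (\<forall>a\<in>A. a \<le> b)))"

definition uncountable_cof_above :: "'a::linorder set \<Rightarrow> 'a \<Rightarrow> bool" where
  "uncountable_cof_above S t \<longleftrightarrow>
     (\<forall>A. countable A \<and> A \<subseteq> {a\<in>S. t < a} \<longrightarrow> (\<exists>b\<in>S. t < b \<and> (\<forall>a\<in>A. b \<le> a)))"

definition countable_cof_sides :: "'a::linorder set \<Rightarrow> 'a \<Rightarrow> 'a set" where
  "countable_cof_sides S t =
     {s\<in>S. (s < t \<longrightarrow> \<not> uncountable_cof_below S t) \<and> (t < s \<longrightarrow> \<not> uncountable_cof_above S t)}"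

lemma self_in_countable_cof_sides: "t \<in> S \<Longrightarrow> t \<in> countable_cof_sides S t"
  by (simp add: countable_cof_sides_def)

lemma countable_cofinal_below:
  obtains A where "countable A" "A \<subseteq> {a\<in>S. a < t}"
    "\<not> uncountable_cof_below S t \<Longrightarrow> \<forall>b\<in>S. b < t \<longrightarrow> (\<exists>a\<in>A. b < a)"
proof (cases "uncountable_cof_below S t")
  case True
  then show ?thesis
    using that[of "{}"] by simp
next
  case False
  then obtain A where "countable A" "A \<subseteq> {a\<in>S. a < t}" "\<not> (\<exists>b\<in>S. b < t \<and> (\<forall>a\<in>A. a \<le> b))"
    unfolding uncountable_cof_below_def by blast
  then show ?thesis
    using that[of A] by (auto simp: not_le)
qed

lemma countable_coinitial_above:
  obtains B where "countable B" "B \<subseteq> {b\<in>S. t < b}"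
    "\<not> uncountable_cof_above S t \<Longrightarrow> \<forall>a\<in>S. t < a \<longrightarrow> (\<exists>b\<in>B. b < a)"
proof (cases "uncountable_cof_above S t")
  case True
  then show ?thesis
    using that[of "{}"] by simp
next
  case False
  then obtain B where "countable B" "B \<subseteq> {b\<in>S. t < b}" "\<not> (\<exists>a\<in>S. t < a \<and> (\<forall>b\<in>B. a \<le> b))"
    unfolding uncountable_cof_above_def by blast
  then show ?thesis
    using that[of B] by (auto simp: not_le)
qed

lemma istopology_localized:
  "istopology (\<lambda>W. W \<subseteq> S \<and> (\<forall>t\<in>W. \<exists>V. openin X V \<and> t \<in> V \<and> V \<inter> P t \<subseteq> W))"
    (is "istopology ?L")
proof -
  have "?L (W \<inter> W')" if "?L W" "?L W'" for W W'
  proof -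
    have "\<exists>V. openin X V \<and> t \<in> V \<and> V \<inter> P t \<subseteq> W \<inter> W'" if "t \<in> W \<inter> W'" for t
    proof -
      obtain V V' where "openin X V" "t \<in> V" "V \<inter> P t \<subseteq> W" "openin X V'" "t \<in> V'" "V' \<inter> P t \<subseteq> W'"
        using \<open>?L W\<close> \<open>?L W'\<close> \<open>t \<in> W \<inter> W'\<close> by blast
      then show ?thesis
        by (intro exI[of _ "V \<inter> V'"]) auto
    qed
    then show ?thesis
      using that by blast
  qed
  moreover have "?L (\<Union>K)" if "\<forall>W\<in>K. ?L W" for K
    using that by (meson Union_iff Union_upper order.trans Union_least)
  ultimately show ?thesis
    unfolding istopology_def by blast
qed

text \<open>The refinement of X in which every point is isolated from each side on which it has
  uncountable cofinality.\<close>
definition cof_refinement :: "'a::linorder topology \<Rightarrow> 'a topology" where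
  "cof_refinement X = topology (\<lambda>W. W \<subseteq> topspace X \<and>
     (\<forall>t\<in>W. \<exists>V. openin X V \<and> t \<in> V \<and> V \<inter> countable_cof_sides (topspace X) t \<subseteq> W))"

lemma openin_cof_refinement:
  "openin (cof_refinement X) W \<longleftrightarrow> W \<subseteq> topspace X \<and>
     (\<forall>t\<in>W. \<exists>V. openin X V \<and> t \<in> V \<and> V \<inter> countable_cof_sides (topspace X) t \<subseteq> W)"
  unfolding cof_refinement_def by (simp add: istopology_localized)

lemma openin_imp_openin_cof_refinement: "openin X W \<Longrightarrow> openin (cof_refinement X) W"
  unfolding openin_cof_refinement using openin_subset by blast

lemma topspace_cof_refinement [simp]: "topspace (cof_refinement X) = topspace X"
proof (rule subset_antisym)
  show "topspace (cof_refinement X) \<subseteq> topspace X"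
    using openin_cof_refinement openin_topspace by blast
  show "topspace X \<subseteq> topspace (cof_refinement X)"
    using openin_imp_openin_cof_refinement openin_subset openin_topspace by blast
qed

lemma continuous_map_cof_refinement_id: "continuous_map (cof_refinement X) X id"
  by (metis topology_finer_continuous_id topspace_cof_refinement openin_imp_openin_cof_refinement)

lemma continuous_map_prod_cof_refinement:
  assumes "continuous_map Y (prod_topology E (cof_refinement X)) f"
  shows "continuous_map Y (prod_topology E X) f"
proof -
  have "continuous_map Y (cof_refinement X) (snd \<circ> f)"
    using assms by (simp add: continuous_map_pairwise)
  then have "continuous_map Y X (snd \<circ> f)"
    using continuous_map_compose[OF _ continuous_map_cof_refinement_id] by fastforce
  then show ?thesis
    using assms by (simp add: continuous_map_pairwise)
qed

lemma GO_space_openin_less: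
  "GO_space X \<Longrightarrow> a \<in> topspace X \<Longrightarrow> openin X {x\<in>topspace X. x < a}"
  unfolding GO_space_def by blast

lemma GO_space_openin_greater:
  "GO_space X \<Longrightarrow> a \<in> topspace X \<Longrightarrow> openin X {x\<in>topspace X. a < x}"
  unfolding GO_space_def by blast

lemma GO_space_convex_nbhd:
  assumes "GO_space X" "openin X U" "x \<in> U"
  shows "\<exists>V. openin X V \<and> x \<in> V \<and> V \<subseteq> U \<and> order_convex_in (topspace X) V"
  using assms unfolding GO_space_def by blast

lemma order_convex_inD:
  "order_convex_in S V \<Longrightarrow> a \<in> V \<Longrightarrow> b \<in> V \<Longrightarrow> c \<in> S \<Longrightarrow> a \<le> c \<Longrightarrow> c \<le> b \<Longrightarrow> c \<in> V"
  unfolding order_convex_in_def by blast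

lemma openin_cof_refinement_Int_sides:
  assumes GO: "GO_space X" and V: "openin X V" and t: "t \<in> topspace X"
  shows "openin (cof_refinement X) (V \<inter> countable_cof_sides (topspace X) t)"
  unfolding openin_cof_refinement
proof (intro conjI ballI)
  let ?S = "countable_cof_sides (topspace X) t"
  show "V \<inter> ?S \<subseteq> topspace X"
    using openin_subset[OF V] by blast
  fix s assume s: "s \<in> V \<inter> ?S"
  have sT: "s \<in> topspace X"
    using s by (simp add: countable_cof_sides_def)
  consider "s < t" | "s = t" | "t < s"
    using less_linear by blast
  then show "\<exists>V'. openin X V' \<and> s \<in> V' \<and> V' \<inter> countable_cof_sides (topspace X) s \<subseteq> V \<inter> ?S"
  proof cases
    case 1
    then have "\<not> uncountable_cof_below (topspace X) t"
      using s by (simp add: countable_cof_sides_def)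
    then have "V \<inter> {u\<in>topspace X. u < t} \<subseteq> V \<inter> ?S"
      by (auto simp: countable_cof_sides_def)
    moreover have "openin X (V \<inter> {u\<in>topspace X. u < t})"
      using GO_space_openin_less[OF GO t] V by blast
    ultimately show ?thesis
      using 1 s sT by (intro exI[of _ "V \<inter> {u\<in>topspace X. u < t}"]) blast
  next
    case 2
    then show ?thesis
      using s V by blast
  next
    case 3
    then have "\<not> uncountable_cof_above (topspace X) t"
      using s by (simp add: countable_cof_sides_def)
    then have "V \<inter> {u\<in>topspace X. t < u} \<subseteq> V \<inter> ?S"
      by (auto simp: countable_cof_sides_def)
    moreover have "openin X (V \<inter> {u\<in>topspace X. t < u})"
      using GO_space_openin_greater[OF GO t] V by blast
    ultimately show ?thesis
      using 3 s sT by (intro exI[of _ "V \<inter> {u\<in>topspace X. t < u}"]) blast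
  qed
qed

section \<open>First countability\<close>

lemma GO_space_local_base_below:
  assumes GO: "GO_space X" and t: "t \<in> topspace X"
  shows "\<exists>A. countable A \<and> (\<forall>a\<in>A. a \<le> t) \<and>
    (\<forall>V. openin X V \<and> t \<in> V \<longrightarrow> (\<exists>a\<in>A. \<exists>L. openin X L \<and> t \<in> L \<and>
        {s\<in>topspace X. a < s \<and> s < t} \<subseteq> V \<inter> countable_cof_sides (topspace X) t \<and>
        (\<forall>u\<in>L \<inter> countable_cof_sides (topspace X) t. u < t \<longrightarrow> a < u)))"
proof -
  let ?S = "countable_cof_sides (topspace X) t"
  obtain A where A: "countable A" "A \<subseteq> {a\<in>topspace X. a < t}"
    and cofinal: "\<not> uncountable_cof_below (topspace X) t \<Longrightarrow>
      \<forall>b\<in>topspace X. b < t \<longrightarrow> (\<exists>a\<in>A. b < a)"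
    using countable_cofinal_below[of "topspace X" t] by blast
  show ?thesis
  proof (intro exI[of _ "insert t A"] conjI allI impI)
    show "countable (insert t A)" "\<forall>a\<in>insert t A. a \<le> t"
      using A by auto
    fix V assume V: "openin X V \<and> t \<in> V"
    obtain V0 where V0: "openin X V0" "t \<in> V0" "V0 \<subseteq> V" and convex: "order_convex_in (topspace X) V0"
      using GO_space_convex_nbhd[OF GO] V by blast
    show "\<exists>a\<in>insert t A. \<exists>L. openin X L \<and> t \<in> L \<and>
        {s\<in>topspace X. a < s \<and> s < t} \<subseteq> V \<inter> ?S \<and> (\<forall>u\<in>L \<inter> ?S. u < t \<longrightarrow> a < u)"
    proof (cases "uncountable_cof_below (topspace X) t \<or> (\<forall>b\<in>V0. \<not> b < t)")
      case True
      then have "\<forall>u\<in>V0 \<inter> ?S. \<not> u < t"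
        by (auto simp: countable_cof_sides_def)
      then show ?thesis
        using V0 by (intro bexI[of _ t] exI[of _ V0]) auto
    next
      case False
      then obtain b where b: "b \<in> V0" "b < t" and countable_cof: "\<not> uncountable_cof_below (topspace X) t"
        by blast
      moreover have "b \<in> topspace X"
        using b V0(1) openin_subset by blast
      ultimately obtain a where a: "a \<in> A" "b < a"
        using cofinal by blast
      have aT: "a \<in> topspace X" "a < t"
        using a A(2) by auto
      have "{s\<in>topspace X. a < s \<and> s < t} \<subseteq> V \<inter> ?S"
        using order_convex_inD[OF convex b(1) V0(2)] V0(3) a(2) countable_cof
        by (auto simp: countable_cof_sides_def)
      moreover have "openin X (V0 \<inter> {u\<in>topspace X. a < u})"
        using GO_space_openin_greater[OF GO aT(1)] V0(1) by blast
      ultimately show ?thesis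
        using a(1) aT(2) V0(2,3) t by (intro bexI[of _ a] exI[of _ "V0 \<inter> {u\<in>topspace X. a < u}"]) auto
    qed
  qed
qed

lemma GO_space_local_base_above:
  assumes GO: "GO_space X" and t: "t \<in> topspace X"
  shows "\<exists>B. countable B \<and> (\<forall>b\<in>B. t \<le> b) \<and>
    (\<forall>V. openin X V \<and> t \<in> V \<longrightarrow> (\<exists>b\<in>B. \<exists>R. openin X R \<and> t \<in> R \<and>
        {s\<in>topspace X. t < s \<and> s < b} \<subseteq> V \<inter> countable_cof_sides (topspace X) t \<and>
        (\<forall>u\<in>R \<inter> countable_cof_sides (topspace X) t. t < u \<longrightarrow> u < b)))"
proof -
  let ?S = "countable_cof_sides (topspace X) t"
  obtain B where B: "countable B" "B \<subseteq> {b\<in>topspace X. t < b}"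
    and coinitial: "\<not> uncountable_cof_above (topspace X) t \<Longrightarrow>
      \<forall>a\<in>topspace X. t < a \<longrightarrow> (\<exists>b\<in>B. b < a)"
    using countable_coinitial_above[of "topspace X" t] by blast
  show ?thesis
  proof (intro exI[of _ "insert t B"] conjI allI impI)
    show "countable (insert t B)" "\<forall>b\<in>insert t B. t \<le> b"
      using B by auto
    fix V assume V: "openin X V \<and> t \<in> V"
    obtain V0 where V0: "openin X V0" "t \<in> V0" "V0 \<subseteq> V" and convex: "order_convex_in (topspace X) V0"
      using GO_space_convex_nbhd[OF GO] V by blast
    show "\<exists>b\<in>insert t B. \<exists>R. openin X R \<and> t \<in> R \<and>
        {s\<in>topspace X. t < s \<and> s < b} \<subseteq> V \<inter> ?S \<and> (\<forall>u\<in>R \<inter> ?S. t < u \<longrightarrow> u < b)"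
    proof (cases "uncountable_cof_above (topspace X) t \<or> (\<forall>a\<in>V0. \<not> t < a)")
      case True
      then have "\<forall>u\<in>V0 \<inter> ?S. \<not> t < u"
        by (auto simp: countable_cof_sides_def)
      then show ?thesis
        using V0 by (intro bexI[of _ t] exI[of _ V0]) auto
    next
      case False
      then obtain a where a: "a \<in> V0" "t < a" and countable_cof: "\<not> uncountable_cof_above (topspace X) t"
        by blast
      moreover have "a \<in> topspace X"
        using a V0(1) openin_subset by blast
      ultimately obtain b where b: "b \<in> B" "b < a"
        using coinitial by blast
      have bT: "b \<in> topspace X" "t < b"
        using b B(2) by auto
      have "{s\<in>topspace X. t < s \<and> s < b} \<subseteq> V \<inter> ?S"
        using order_convex_inD[OF convex V0(2) a(1)] V0(3) b(2) countable_cof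
        by (auto simp: countable_cof_sides_def)
      moreover have "openin X (V0 \<inter> {u\<in>topspace X. u < b})"
        using GO_space_openin_less[OF GO bT(1)] V0(1) by blast
      ultimately show ?thesis
        using b(1) bT(2) V0(2,3) t by (intro bexI[of _ b] exI[of _ "V0 \<inter> {u\<in>topspace X. u < b}"]) auto
    qed
  qed
qed

lemma GO_space_countable_interval_base:
  assumes GO: "GO_space X" and t: "t \<in> topspace X"
  shows "\<exists>A B. countable A \<and> countable B \<and> (\<forall>V. openin X V \<and> t \<in> V \<longrightarrow>
    (\<exists>a\<in>A. \<exists>b\<in>B. \<exists>U. openin X U \<and> t \<in> U \<and>
      U \<inter> countable_cof_sides (topspace X) t \<subseteq> insert t {s\<in>topspace X. a < s \<and> s < b} \<and>
      insert t {s\<in>topspace X. a < s \<and> s < b} \<subseteq> V \<inter> countable_cof_sides (topspace X) t))"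
proof -
  let ?S = "countable_cof_sides (topspace X) t"
  let ?I = "\<lambda>a b. insert t {s\<in>topspace X. a < s \<and> s < b}"
  obtain A where A: "countable A" "\<forall>a\<in>A. a \<le> t"
    and below: "\<forall>V. openin X V \<and> t \<in> V \<longrightarrow> (\<exists>a\<in>A. \<exists>L. openin X L \<and> t \<in> L \<and>
        {s\<in>topspace X. a < s \<and> s < t} \<subseteq> V \<inter> ?S \<and> (\<forall>u\<in>L \<inter> ?S. u < t \<longrightarrow> a < u))"
    using GO_space_local_base_below[OF GO t] by (elim exE conjE)
  obtain B where B: "countable B" "\<forall>b\<in>B. t \<le> b"
    and above: "\<forall>V. openin X V \<and> t \<in> V \<longrightarrow> (\<exists>b\<in>B. \<exists>R. openin X R \<and> t \<in> R \<and>
        {s\<in>topspace X. t < s \<and> s < b} \<subseteq> V \<inter> ?S \<and> (\<forall>u\<in>R \<inter> ?S. t < u \<longrightarrow> u < b))"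
    using GO_space_local_base_above[OF GO t] by (elim exE conjE)
  show ?thesis
  proof (rule exI[of _ A], rule exI[of _ B], intro conjI allI impI)
    fix V assume V: "openin X V \<and> t \<in> V"
    obtain a L where a: "a \<in> A" and L: "openin X L" "t \<in> L"
      and left: "{s\<in>topspace X. a < s \<and> s < t} \<subseteq> V \<inter> ?S" "\<forall>u\<in>L \<inter> ?S. u < t \<longrightarrow> a < u"
      using below V by blast
    obtain b R where b: "b \<in> B" and R: "openin X R" "t \<in> R"
      and right: "{s\<in>topspace X. t < s \<and> s < b} \<subseteq> V \<inter> ?S" "\<forall>u\<in>R \<inter> ?S. t < u \<longrightarrow> u < b"
      using above V by blast
    have "L \<inter> R \<inter> ?S \<subseteq> ?I a b"
    proof
      fix u assume u: "u \<in> L \<inter> R \<inter> ?S"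
      have "a < u" if "u < t"
        using left(2) u that by blast
      moreover have "u < b" if "t < u"
        using right(2) u that by blast
      ultimately show "u \<in> ?I a b"
        using u A(2) a B(2) b unfolding countable_cof_sides_def
        by (cases u t rule: linorder_cases) auto
    qed
    moreover have "?I a b \<subseteq> V \<inter> ?S"
    proof
      fix s assume "s \<in> ?I a b"
      then have "s = t \<or> s \<in> {s\<in>topspace X. a < s \<and> s < t} \<or> s \<in> {s\<in>topspace X. t < s \<and> s < b}"
        by (cases s t rule: linorder_cases) auto
      then show "s \<in> V \<inter> ?S"
        using left(1) right(1) V self_in_countable_cof_sides[OF t] by blast
    qed
    ultimately have "openin X (L \<inter> R) \<and> t \<in> L \<inter> R \<and> L \<inter> R \<inter> ?S \<subseteq> ?I a b \<and> ?I a b \<subseteq> V \<inter> ?S"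
      using L R by auto
    then show "\<exists>a\<in>A. \<exists>b\<in>B. \<exists>U. openin X U \<and> t \<in> U \<and> U \<inter> ?S \<subseteq> ?I a b \<and> ?I a b \<subseteq> V \<inter> ?S"
      using a b by blast
  qed (use A B in auto)
qed

lemma first_countable_cof_refinement:
  assumes GO: "GO_space X"
  shows "first_countable (cof_refinement X)"
  unfolding first_countable_neighbourhood_base topspace_cof_refinement
proof
  fix t assume t: "t \<in> topspace X"
  let ?S = "countable_cof_sides (topspace X) t"
  let ?I = "\<lambda>a b. insert t {s\<in>topspace X. a < s \<and> s < b}"
  obtain A B where AB: "countable A" "countable B"
    and base: "\<forall>V. openin X V \<and> t \<in> V \<longrightarrow> (\<exists>a\<in>A. \<exists>b\<in>B. \<exists>U. openin X U \<and> t \<in> U \<and>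
      U \<inter> ?S \<subseteq> ?I a b \<and> ?I a b \<subseteq> V \<inter> ?S)"
    using GO_space_countable_interval_base[OF GO t] by (elim exE conjE)
  let ?\<B> = "(\<lambda>(a, b). ?I a b) ` (A \<times> B)"
  have "neighbourhood_base_at t (\<lambda>W. W \<in> ?\<B>) (cof_refinement X)"
    unfolding neighbourhood_base_at_def
  proof (intro allI impI)
    fix W assume "openin (cof_refinement X) W \<and> t \<in> W"
    then obtain V where V: "openin X V" "t \<in> V" "V \<inter> ?S \<subseteq> W"
      unfolding openin_cof_refinement by blast
    obtain a b U where ab: "a \<in> A" "b \<in> B" and U: "openin X U" "t \<in> U"
      "U \<inter> ?S \<subseteq> ?I a b" "?I a b \<subseteq> V \<inter> ?S"
      using base V(1,2) by blast
    have "openin (cof_refinement X) (U \<inter> ?S)"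
      by (rule openin_cof_refinement_Int_sides[OF GO U(1) t])
    moreover have "t \<in> U \<inter> ?S"
      using U(2) self_in_countable_cof_sides[OF t] by blast
    moreover have "?I a b \<in> ?\<B>"
      using ab by force
    ultimately show "\<exists>U' N. openin (cof_refinement X) U' \<and> N \<in> ?\<B> \<and> t \<in> U' \<and> U' \<subseteq> N \<and> N \<subseteq> W"
      using U(3,4) V(3) by (intro exI[of _ "U \<inter> ?S"] exI[of _ "?I a b"]) auto
  qed
  then show "\<exists>\<B>. countable \<B> \<and> neighbourhood_base_at t (\<lambda>W. W \<in> \<B>) (cof_refinement X)"
    using AB by (intro exI[of _ "?\<B>"]) auto
qed

lemma first_countable_prod_topology:
  assumes E: "first_countable E" and X: "first_countable X"
  shows "first_countable (prod_topology E X)"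
  unfolding first_countable_neighbourhood_base
proof
  fix z assume "z \<in> topspace (prod_topology E X)"
  then obtain e x where z: "z = (e, x)" and e: "e \<in> topspace E" and x: "x \<in> topspace X"
    by auto
  obtain \<B>E where \<B>E: "countable \<B>E" "\<forall>V\<in>\<B>E. openin E V"
      "\<forall>U. openin E U \<and> e \<in> U \<longrightarrow> (\<exists>V\<in>\<B>E. e \<in> V \<and> V \<subseteq> U)"
    using E[unfolded first_countable_def, rule_format, OF e] by (elim exE conjE)
  obtain \<B>X where \<B>X: "countable \<B>X" "\<forall>V\<in>\<B>X. openin X V"
      "\<forall>U. openin X U \<and> x \<in> U \<longrightarrow> (\<exists>V\<in>\<B>X. x \<in> V \<and> V \<subseteq> U)"
    using X[unfolded first_countable_def, rule_format, OF x] by (elim exE conjE)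
  have "neighbourhood_base_at z (\<lambda>W. W \<in> (\<lambda>(U, V). U \<times> V) ` (\<B>E \<times> \<B>X)) (prod_topology E X)"
    unfolding neighbourhood_base_at_def
  proof (intro allI impI)
    fix W assume "openin (prod_topology E X) W \<and> z \<in> W"
    then obtain U V where UV: "openin E U" "openin X V" "e \<in> U" "x \<in> V" "U \<times> V \<subseteq> W"
      unfolding z openin_prod_topology_alt by (elim conjE allE impE exE) auto
    obtain U' where U': "U' \<in> \<B>E" "e \<in> U'" "U' \<subseteq> U"
      using \<B>E(3) UV(1,3) by blast
    obtain V' where V': "V' \<in> \<B>X" "x \<in> V'" "V' \<subseteq> V"
      using \<B>X(3) UV(2,4) by blast
    have "openin (prod_topology E X) (U' \<times> V')"
      using \<B>E(2) \<B>X(2) U'(1) V'(1) by (simp add: openin_prod_Times_iff)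
    moreover have "U' \<times> V' \<in> (\<lambda>(U, V). U \<times> V) ` (\<B>E \<times> \<B>X)"
      using U'(1) V'(1) by (intro image_eqI[of _ _ "(U', V')"]) auto
    moreover have "U' \<times> V' \<subseteq> W"
      using U'(3) V'(3) UV(5) by blast
    ultimately show "\<exists>U V. openin (prod_topology E X) U \<and> V \<in> (\<lambda>(U, V). U \<times> V) ` (\<B>E \<times> \<B>X) \<and>
        z \<in> U \<and> U \<subseteq> V \<and> V \<subseteq> W"
      using U'(2) V'(2) z by (intro exI[of _ "U' \<times> V'"]) auto
  qed
  then show "\<exists>\<B>. countable \<B> \<and> neighbourhood_base_at z (\<lambda>W. W \<in> \<B>) (prod_topology E X)"
    using \<B>E(1) \<B>X(1) by (intro exI[of _ "(\<lambda>(U, V). U \<times> V) ` (\<B>E \<times> \<B>X)"]) auto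
qed

section \<open>Lower semicontinuity into the refined product\<close>

definition lower_semicontinuous_map :: "'b topology \<Rightarrow> 'c topology \<Rightarrow> ('b \<Rightarrow> 'c set) \<Rightarrow> bool" where
  "lower_semicontinuous_map Y Z \<phi> \<longleftrightarrow> (\<forall>U. openin Z U \<longrightarrow> openin Y {y\<in>topspace Y. \<phi> y \<inter> U \<noteq> {}})"

lemma GO_space_closed_family_below:
  assumes GO: "GO_space X" and t: "t \<in> topspace X" and "countable \<F>"
    and closed: "\<And>F. F \<in> \<F> \<Longrightarrow> closedin X F" and cof: "uncountable_cof_below (topspace X) t"
  shows "\<exists>L. openin X L \<and> t \<in> L \<and> (\<forall>F\<in>\<F>. \<forall>s\<in>F \<inter> L. s < t \<longrightarrow> t \<in> F)"
proof (cases "\<exists>L. openin X L \<and> t \<in> L \<and> (\<forall>s\<in>L. \<not> s < t)")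
  case True
  then show ?thesis
    by blast
next
  case False
  then have left_points: "\<exists>s\<in>V. s < t" if "openin X V" "t \<in> V" for V
    using that by blast
  have "\<forall>F\<in>{F\<in>\<F>. t \<notin> F}. \<exists>a. a \<in> topspace X \<and> a < t \<and> (\<forall>s\<in>F. \<not> (a < s \<and> s < t))"
  proof
    fix F assume "F \<in> {F\<in>\<F>. t \<notin> F}"
    then have F: "F \<in> \<F>" "t \<notin> F"
      by auto
    have "openin X (topspace X - F)"
      using closed[OF F(1)] by blast
    then obtain V where V: "openin X V" "t \<in> V" "V \<subseteq> topspace X - F" "order_convex_in (topspace X) V"
      using GO_space_convex_nbhd[OF GO _, of "topspace X - F" t] t F(2) by blast
    then obtain a where a: "a \<in> V" "a < t"
      using left_points by blast
    have "s \<in> V" if "s \<in> F" "a < s" "s < t" for s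
      using order_convex_inD[OF V(4) a(1) V(2)] closedin_subset[OF closed[OF F(1)]] that by auto
    then have "\<forall>s\<in>F. \<not> (a < s \<and> s < t)"
      using V(3) by blast
    moreover have "a \<in> topspace X"
      using a(1) V(1) openin_subset by blast
    ultimately show "\<exists>a. a \<in> topspace X \<and> a < t \<and> (\<forall>s\<in>F. \<not> (a < s \<and> s < t))"
      using a(2) by blast
  qed
  then obtain \<alpha> where \<alpha>: "\<forall>F\<in>{F\<in>\<F>. t \<notin> F}. \<alpha> F \<in> topspace X \<and> \<alpha> F < t \<and> (\<forall>s\<in>F. \<not> (\<alpha> F < s \<and> s < t))"
    by (rule bchoice[THEN exE])
  have "countable (\<alpha> ` {F\<in>\<F>. t \<notin> F}) \<and> \<alpha> ` {F\<in>\<F>. t \<notin> F} \<subseteq> {a\<in>topspace X. a < t}"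
    using \<open>countable \<F>\<close> \<alpha> by auto
  then obtain b where b: "b \<in> topspace X" "b < t" "\<forall>a\<in>\<alpha> ` {F\<in>\<F>. t \<notin> F}. a \<le> b"
    using cof unfolding uncountable_cof_below_def by (elim allE impE) auto
  have "t \<in> F" if "F \<in> \<F>" "s \<in> F" "b < s" "s < t" for F s
  proof (rule ccontr)
    assume "t \<notin> F"
    then have "\<alpha> F \<le> b" "\<not> (\<alpha> F < s \<and> s < t)"
      using b(3) \<alpha> that(1,2) \<open>t \<notin> F\<close> by auto
    then show False
      using that(3,4) by simp
  qed
  then show ?thesis
    using GO_space_openin_greater[OF GO b(1)] b(2) t
    by (intro exI[of _ "{u\<in>topspace X. b < u}"]) auto
qed

lemma GO_space_closed_family_above:
  assumes GO: "GO_space X" and t: "t \<in> topspace X" and "countable \<F>"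
    and closed: "\<And>F. F \<in> \<F> \<Longrightarrow> closedin X F" and cof: "uncountable_cof_above (topspace X) t"
  shows "\<exists>R. openin X R \<and> t \<in> R \<and> (\<forall>F\<in>\<F>. \<forall>s\<in>F \<inter> R. t < s \<longrightarrow> t \<in> F)"
proof (cases "\<exists>R. openin X R \<and> t \<in> R \<and> (\<forall>s\<in>R. \<not> t < s)")
  case True
  then show ?thesis
    by blast
next
  case False
  then have right_points: "\<exists>s\<in>V. t < s" if "openin X V" "t \<in> V" for V
    using that by blast
  have "\<forall>F\<in>{F\<in>\<F>. t \<notin> F}. \<exists>a. a \<in> topspace X \<and> t < a \<and> (\<forall>s\<in>F. \<not> (t < s \<and> s < a))"
  proof
    fix F assume "F \<in> {F\<in>\<F>. t \<notin> F}"
    then have F: "F \<in> \<F>" "t \<notin> F"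
      by auto
    have "openin X (topspace X - F)"
      using closed[OF F(1)] by blast
    then obtain V where V: "openin X V" "t \<in> V" "V \<subseteq> topspace X - F" "order_convex_in (topspace X) V"
      using GO_space_convex_nbhd[OF GO _, of "topspace X - F" t] t F(2) by blast
    then obtain a where a: "a \<in> V" "t < a"
      using right_points by blast
    have "s \<in> V" if "s \<in> F" "t < s" "s < a" for s
      using order_convex_inD[OF V(4) V(2) a(1)] closedin_subset[OF closed[OF F(1)]] that by auto
    then have "\<forall>s\<in>F. \<not> (t < s \<and> s < a)"
      using V(3) by blast
    moreover have "a \<in> topspace X"
      using a(1) V(1) openin_subset by blast
    ultimately show "\<exists>a. a \<in> topspace X \<and> t < a \<and> (\<forall>s\<in>F. \<not> (t < s \<and> s < a))"
      using a(2) by blast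
  qed
  then obtain \<alpha> where \<alpha>: "\<forall>F\<in>{F\<in>\<F>. t \<notin> F}. \<alpha> F \<in> topspace X \<and> t < \<alpha> F \<and> (\<forall>s\<in>F. \<not> (t < s \<and> s < \<alpha> F))"
    by (rule bchoice[THEN exE])
  have "countable (\<alpha> ` {F\<in>\<F>. t \<notin> F}) \<and> \<alpha> ` {F\<in>\<F>. t \<notin> F} \<subseteq> {a\<in>topspace X. t < a}"
    using \<open>countable \<F>\<close> \<alpha> by auto
  then obtain b where b: "b \<in> topspace X" "t < b" "\<forall>a\<in>\<alpha> ` {F\<in>\<F>. t \<notin> F}. b \<le> a"
    using cof unfolding uncountable_cof_above_def by (elim allE impE) auto
  have "t \<in> F" if "F \<in> \<F>" "s \<in> F" "s < b" "t < s" for F s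
  proof (rule ccontr)
    assume "t \<notin> F"
    then have "b \<le> \<alpha> F" "\<not> (t < s \<and> s < \<alpha> F)"
      using b(3) \<alpha> that(1,2) \<open>t \<notin> F\<close> by auto
    then show False
      using that(3,4) by simp
  qed
  then show ?thesis
    using GO_space_openin_less[OF GO b(1)] b(2) t
    by (intro exI[of _ "{u\<in>topspace X. u < b}"]) auto
qed

lemma GO_space_closed_family_nbhd:
  assumes GO: "GO_space X" and t: "t \<in> topspace X" and "countable \<F>"
    and closed: "\<And>F. F \<in> \<F> \<Longrightarrow> closedin X F"
  shows "\<exists>L. openin X L \<and> t \<in> L \<and>
    (\<forall>F\<in>\<F>. \<forall>s\<in>F \<inter> L. s \<notin> countable_cof_sides (topspace X) t \<longrightarrow> t \<in> F)"
proof -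
  obtain L where L: "openin X L" "t \<in> L"
    "uncountable_cof_below (topspace X) t \<Longrightarrow> \<forall>F\<in>\<F>. \<forall>s\<in>F \<inter> L. s < t \<longrightarrow> t \<in> F"
  proof (cases "uncountable_cof_below (topspace X) t")
    case True
    then show ?thesis
      using GO_space_closed_family_below[OF assms True] that by blast
  next
    case False
    then show ?thesis
      using that[of "topspace X"] t by blast
  qed
  obtain R where R: "openin X R" "t \<in> R"
    "uncountable_cof_above (topspace X) t \<Longrightarrow> \<forall>F\<in>\<F>. \<forall>s\<in>F \<inter> R. t < s \<longrightarrow> t \<in> F"
  proof (cases "uncountable_cof_above (topspace X) t")
    case True
    then show ?thesis
      using GO_space_closed_family_above[OF assms True] that by blast
  next
    case False
    then show ?thesis
      using that[of "topspace X"] t by blast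
  qed
  have "t \<in> F" if "F \<in> \<F>" "s \<in> F \<inter> (L \<inter> R)" "s \<notin> countable_cof_sides (topspace X) t" for F s
  proof -
    have "s \<in> topspace X"
      using closedin_subset[OF closed[OF that(1)]] that(2) by blast
    then show ?thesis
      using L(3) R(3) that unfolding countable_cof_sides_def by blast
  qed
  then show ?thesis
    using L(1,2) R(1,2) by (intro exI[of _ "L \<inter> R"]) auto
qed

lemma closedin_prod_slice:
  assumes "closedin (prod_topology E X) C" "e \<in> topspace E"
  shows "closedin X {s. (e, s) \<in> C}"
proof -
  have "continuous_map X (prod_topology E X) (\<lambda>s. (e, s))"
    using assms(2) by (intro continuous_map_pairedI) auto
  moreover have "{s. (e, s) \<in> C} = {s \<in> topspace X. (e, s) \<in> C}"
    using closedin_subset[OF assms(1)] by auto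
  ultimately show ?thesis
    using closedin_continuous_map_preimage[OF _ assms(1)] by simp
qed

lemma GO_space_closed_values_nbhd:
  assumes GO: "GO_space X" and t: "t \<in> topspace X"
    and "countable (topspace Y)" and "countable (topspace E)"
    and closed: "\<forall>y\<in>topspace Y. closedin (prod_topology E X) (\<phi> y)"
  shows "\<exists>L. openin X L \<and> t \<in> L \<and> (\<forall>y\<in>topspace Y. \<forall>e s.
    (e, s) \<in> \<phi> y \<and> s \<in> L \<and> s \<notin> countable_cof_sides (topspace X) t \<longrightarrow> (e, t) \<in> \<phi> y)"
proof -
  define \<F> where "\<F> = (\<lambda>(y, e). {s. (e, s) \<in> \<phi> y}) ` (topspace Y \<times> topspace E)"
  have "countable \<F>"
    using assms(3,4) by (simp add: \<F>_def)
  moreover have "closedin X F" if F: "F \<in> \<F>" for F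
  proof -
    obtain y e where ye: "y \<in> topspace Y" "e \<in> topspace E" and F_eq: "F = {s. (e, s) \<in> \<phi> y}"
      using F unfolding \<F>_def by auto
    show ?thesis
      unfolding F_eq by (rule closedin_prod_slice[OF _ ye(2)]) (use closed ye(1) in blast)
  qed
  ultimately obtain L where L: "openin X L" "t \<in> L"
    "\<forall>F\<in>\<F>. \<forall>s\<in>F \<inter> L. s \<notin> countable_cof_sides (topspace X) t \<longrightarrow> t \<in> F"
    using GO_space_closed_family_nbhd[OF GO t] by metis
  have "(e, t) \<in> \<phi> y"
    if y: "y \<in> topspace Y" and es: "(e, s) \<in> \<phi> y" "s \<in> L" "s \<notin> countable_cof_sides (topspace X) t" for y e s
  proof -
    have "e \<in> topspace E"
      using closedin_subset[OF closed[rule_format, OF y]] es(1) by (auto simp: topspace_prod_topology)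
    then have "{s. (e, s) \<in> \<phi> y} \<in> \<F>"
      unfolding \<F>_def using y by (intro image_eqI[of _ _ "(y, e)"]) auto
    then show ?thesis
      using L(3)[rule_format, OF _ IntI] es by fastforce
  qed
  then show ?thesis
    using L(1,2) by (intro exI[of _ L]) blast
qed

lemma lower_semicontinuous_map_cof_refinement:
  assumes GO: "GO_space X" and "countable (topspace Y)" and "countable (topspace E)"
    and closed: "\<And>y. y \<in> topspace Y \<Longrightarrow> closedin (prod_topology E X) (\<phi> y)"
    and lsc: "lower_semicontinuous_map Y (prod_topology E X) \<phi>"
  shows "lower_semicontinuous_map Y (prod_topology E (cof_refinement X)) \<phi>"
  unfolding lower_semicontinuous_map_def
proof (intro allI impI)
  have closed_all: "\<forall>y\<in>topspace Y. closedin (prod_topology E X) (\<phi> y)"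
    using closed by blast
  fix W assume W: "openin (prod_topology E (cof_refinement X)) W"
  show "openin Y {y\<in>topspace Y. \<phi> y \<inter> W \<noteq> {}}"
  proof (subst openin_subopen, intro ballI)
    fix y0 assume "y0 \<in> {y\<in>topspace Y. \<phi> y \<inter> W \<noteq> {}}"
    then obtain e t where y0: "y0 \<in> topspace Y" and et: "(e, t) \<in> \<phi> y0" "(e, t) \<in> W"
      by auto
    have t: "t \<in> topspace X"
      using closedin_subset[OF closed[OF y0]] et(1) by (auto simp: topspace_prod_topology)
    obtain U V where UV: "openin E U" "openin (cof_refinement X) V" "e \<in> U" "t \<in> V" "U \<times> V \<subseteq> W"
      using W[unfolded openin_prod_topology_alt, rule_format, OF et(2)] by (elim exE conjE)
    obtain V1 where V1: "openin X V1" "t \<in> V1" "V1 \<inter> countable_cof_sides (topspace X) t \<subseteq> V"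
      using UV(2,4) unfolding openin_cof_refinement by blast
    obtain L where L: "openin X L" "t \<in> L" "\<forall>y\<in>topspace Y. \<forall>e s.
        (e, s) \<in> \<phi> y \<and> s \<in> L \<and> s \<notin> countable_cof_sides (topspace X) t \<longrightarrow> (e, t) \<in> \<phi> y"
      using GO_space_closed_values_nbhd[OF GO t assms(2,3) closed_all] by (elim exE conjE)
    have "openin (prod_topology E X) (U \<times> (V1 \<inter> L))"
      using UV(1) V1(1) L(1) by (simp add: openin_prod_Times_iff openin_Int)
    then have "openin Y {y\<in>topspace Y. \<phi> y \<inter> U \<times> (V1 \<inter> L) \<noteq> {}}"
      using lsc unfolding lower_semicontinuous_map_def by blast
    moreover have "y0 \<in> {y\<in>topspace Y. \<phi> y \<inter> U \<times> (V1 \<inter> L) \<noteq> {}}"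
      using y0 et(1) UV(3) V1(2) L(2) by auto
    moreover have "{y\<in>topspace Y. \<phi> y \<inter> U \<times> (V1 \<inter> L) \<noteq> {}} \<subseteq> {y\<in>topspace Y. \<phi> y \<inter> W \<noteq> {}}"
    proof
      fix y assume "y \<in> {y\<in>topspace Y. \<phi> y \<inter> U \<times> (V1 \<inter> L) \<noteq> {}}"
      then obtain e' s where y: "y \<in> topspace Y" and es: "(e', s) \<in> \<phi> y" "e' \<in> U" "s \<in> V1" "s \<in> L"
        by auto
      have "\<phi> y \<inter> W \<noteq> {}"
      proof (cases "s \<in> countable_cof_sides (topspace X) t")
        case True
        then show ?thesis
          using es V1(3) UV(5) by blast
      next
        case False
        then have "(e', t) \<in> \<phi> y"
          using L(3) y es(1,4) by blast
        then show ?thesis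
          using es(2) UV(4,5) by blast
      qed
      then show "y \<in> {y\<in>topspace Y. \<phi> y \<inter> W \<noteq> {}}"
        using y by blast
    qed
    ultimately show "\<exists>T. openin Y T \<and> y0 \<in> T \<and> T \<subseteq> {y\<in>topspace Y. \<phi> y \<inter> W \<noteq> {}}"
      by blast
  qed
qed

section \<open>Selections on countable zero-dimensional spaces\<close>

lemma countable_regular_imp_dim_le_0:
  assumes countable: "countable (topspace Y)" and regular: "regular_space Y"
  shows "Y dim_le 0"
  unfolding dimension_le_0_neighbourhood_base_of_clopen neighbourhood_base_of
proof (intro allI impI)
  fix W k assume Wk: "openin Y W \<and> k \<in> W"
  have "completely_regular_space Y"
    using countable regular countable_imp_Lindelof_space regular_Lindelof_imp_normal_space
      normal_imp_completely_regular_space by blast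
  moreover have "closedin Y (topspace Y - W)" "k \<in> topspace Y - (topspace Y - W)"
    using Wk openin_subset by blast+
  ultimately obtain f :: "'a \<Rightarrow> real" where f: "continuous_map Y (top_of_set {0..1}) f"
      "f k = 0" "f ` (topspace Y - W) \<subseteq> {1}"
    unfolding completely_regular_space_def by metis
  have f_real: "continuous_map Y euclideanreal f"
    using f(1) continuous_map_in_subtopology by blast
  text \<open>A countable space has countably many values under f, so some level r in (0,1) is
    missed and the sublevel set at r is clopen.\<close>
  have "\<not> {0<..<(1::real)} \<subseteq> f ` topspace Y"
    using countable uncountable_open_interval[of 0 1] countable_subset by (metis countable_image less_numeral_extra(1))
  then obtain r where r: "0 < r" "r < 1" "r \<notin> f ` topspace Y"
    by (auto simp: subset_iff)
  define C where "C = {v \<in> topspace Y. f v \<in> {..<r}}"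
  have "openin Y C"
    unfolding C_def using f_real by (rule openin_continuous_map_preimage) simp
  moreover have "closedin Y C"
  proof -
    have "C = {v \<in> topspace Y. f v \<in> {..r}}"
      unfolding C_def using r(3) by force
    then show ?thesis
      using closedin_continuous_map_preimage[OF f_real, of "{..r}"] by simp
  qed
  moreover have "k \<in> C" "C \<subseteq> W"
    unfolding C_def using Wk openin_subset[of Y W] f(2,3) r(1,2) by force+
  ultimately show "\<exists>U V. openin Y U \<and> (closedin Y V \<and> openin Y V) \<and> k \<in> U \<and> U \<subseteq> V \<and> V \<subseteq> W"
    by blast
qed

lemma first_countable_nat_nbhd_base:
  assumes "first_countable Z" and z: "z \<in> topspace Z"
  shows "\<exists>b :: nat \<Rightarrow> 'z set. (\<forall>i. openin Z (b i) \<and> z \<in> b i) \<and>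
    (\<forall>U. openin Z U \<and> z \<in> U \<longrightarrow> (\<exists>i. b i \<subseteq> U))"
proof -
  obtain \<B> where \<B>: "countable \<B>" "\<forall>V\<in>\<B>. openin Z V"
      "\<forall>U. openin Z U \<and> z \<in> U \<longrightarrow> (\<exists>V\<in>\<B>. z \<in> V \<and> V \<subseteq> U)"
    using assms(1)[unfolded first_countable_def, rule_format, OF z] by (elim exE conjE)
  define \<B>z where "\<B>z = {V\<in>\<B>. z \<in> V}"
  have "countable \<B>z"
    using \<B>(1) by (simp add: \<B>z_def)
  have "\<B>z \<noteq> {}"
    using \<B>(3) openin_topspace[of Z] z unfolding \<B>z_def by blast
  then have "openin Z (from_nat_into \<B>z i) \<and> z \<in> from_nat_into \<B>z i" for i
    using \<B>(2) from_nat_into[of \<B>z i] unfolding \<B>z_def by blast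
  moreover have "\<exists>i. from_nat_into \<B>z i \<subseteq> U" if U: "openin Z U" "z \<in> U" for U
  proof -
    obtain V where V: "V \<in> \<B>z" "V \<subseteq> U"
      using \<B>(3) U unfolding \<B>z_def by blast
    then obtain i where "from_nat_into \<B>z i = V"
      using from_nat_into_surj[OF \<open>countable \<B>z\<close>] by blast
    then show ?thesis
      using V(2) by blast
  qed
  ultimately show ?thesis
    by (intro exI[of _ "from_nat_into \<B>z"]) blast
qed

definition locally_constant_on :: "'a topology \<Rightarrow> ('a \<Rightarrow> 'b) \<Rightarrow> bool" where
  "locally_constant_on Y T \<longleftrightarrow> (\<forall>w\<in>topspace Y. \<exists>N. openin Y N \<and> w \<in> N \<and> (\<forall>v\<in>N. T v = T w))"

lemma openin_locally_constant_fibre: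
  assumes "locally_constant_on Y T"
  shows "openin Y {v \<in> topspace Y. T v = c}"
proof (subst openin_subopen, intro ballI)
  fix w assume w: "w \<in> {v \<in> topspace Y. T v = c}"
  then obtain N where N: "openin Y N" "w \<in> N" "\<forall>v\<in>N. T v = T w"
    using assms unfolding locally_constant_on_def by blast
  have "N \<subseteq> {v \<in> topspace Y. T v = c}"
    using N(1,3) w openin_subset by fastforce
  then show "\<exists>N. openin Y N \<and> w \<in> N \<and> N \<subseteq> {v \<in> topspace Y. T v = c}"
    using N(1,2) by blast
qed

lemma locally_constant_on_patch:
  assumes T: "locally_constant_on Y T" and C: "openin Y C" "closedin Y C"
  shows "locally_constant_on Y (\<lambda>v. if v \<in> C then G else T v)"
  unfolding locally_constant_on_def
proof
  fix w assume w: "w \<in> topspace Y"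
  show "\<exists>N. openin Y N \<and> w \<in> N \<and> (\<forall>v\<in>N. (if v \<in> C then G else T v) = (if w \<in> C then G else T w))"
  proof (cases "w \<in> C")
    case True
    then show ?thesis
      using C(1) by (intro exI[of _ C]) auto
  next
    case False
    obtain N where N: "openin Y N" "w \<in> N" "\<forall>v\<in>N. T v = T w"
      using T w unfolding locally_constant_on_def by blast
    have "openin Y (N - C)"
      using N(1) C(2) by (rule openin_diff)
    moreover have "\<forall>v\<in>N - C. (if v \<in> C then G else T v) = (if w \<in> C then G else T w)"
      using N(3) False by simp
    ultimately show ?thesis
      using N(2) False by (intro exI[of _ "N - C"]) blast
  qed
qed

text \<open>T w is the open region in which the selection must take its value at w. Local constancy
  of T makes the set of points sharing the constraint of a given point open.\<close>
definition admissible_constraint ::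
    "'y topology \<Rightarrow> 'z topology \<Rightarrow> ('y \<Rightarrow> 'z set) \<Rightarrow> ('y \<Rightarrow> 'z set) \<Rightarrow> bool" where
  "admissible_constraint Y Z \<phi> T \<longleftrightarrow>
     locally_constant_on Y T \<and> (\<forall>w\<in>topspace Y. openin Z (T w) \<and> \<phi> w \<inter> T w \<noteq> {})"

lemma dim_le_0_clopen_nbhd:
  assumes "X dim_le 0" "openin X W" "x \<in> W"
  shows "\<exists>C. openin X C \<and> closedin X C \<and> x \<in> C \<and> C \<subseteq> W"
proof -
  obtain U C where "openin X U" "closedin X C" "openin X C" "x \<in> U" "U \<subseteq> C" "C \<subseteq> W"
    using assms(1)[unfolded dimension_le_0_neighbourhood_base_of_clopen neighbourhood_base_of] assms(2,3)
    by (elim allE impE exE conjE) auto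
  then show ?thesis
    by blast
qed

lemma admissible_constraint_refine:
  assumes Y0: "Y dim_le 0" and t1: "t1_space Y" and lsc: "lower_semicontinuous_map Y Z \<phi>"
    and T: "admissible_constraint Y Z \<phi> T" and k: "k \<in> topspace Y" and F: "finite F" "k \<notin> F"
    and p: "p \<in> \<phi> k \<inter> T k" and B: "openin Z B" "p \<in> B"
  shows "\<exists>T'. admissible_constraint Y Z \<phi> T' \<and> (\<forall>v\<in>topspace Y. T' v \<subseteq> T v) \<and> p \<in> T' k \<and>
    (\<forall>v\<in>F. T' v = T v) \<and> (\<exists>C. openin Y C \<and> k \<in> C \<and> C \<inter> F = {} \<and> (\<forall>v\<in>C. T' v \<subseteq> B))"
proof -
  define G where "G = T k \<inter> B"
  have T_lc: "locally_constant_on Y T" and G: "openin Z G" "p \<in> \<phi> k \<inter> G"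
    using T k p B unfolding admissible_constraint_def G_def by auto
  define N where "N = {v \<in> topspace Y. T v = T k} \<inter> {v \<in> topspace Y. \<phi> v \<inter> G \<noteq> {}} - F \<inter> topspace Y"
  have "openin Y N"
  proof -
    have "openin Y {v \<in> topspace Y. T v = T k}"
      using T_lc by (rule openin_locally_constant_fibre)
    moreover have "openin Y {v \<in> topspace Y. \<phi> v \<inter> G \<noteq> {}}"
      using lsc G(1) unfolding lower_semicontinuous_map_def by blast
    moreover have "closedin Y (F \<inter> topspace Y)"
      using t1 F(1) unfolding t1_space_closedin_finite by simp
    ultimately show ?thesis
      unfolding N_def by (intro openin_diff openin_Int)
  qed
  moreover have "k \<in> N"
    unfolding N_def using k F(2) G(2) by blast
  ultimately obtain C where C: "openin Y C" "closedin Y C" "k \<in> C" "C \<subseteq> N"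
    using dim_le_0_clopen_nbhd[OF Y0] by blast
  then have CN: "\<And>v. v \<in> C \<Longrightarrow> T v = T k \<and> \<phi> v \<inter> G \<noteq> {} \<and> v \<notin> F"
    unfolding N_def by blast
  let ?T' = "\<lambda>v. if v \<in> C then G else T v"
  have "locally_constant_on Y ?T'"
    using T_lc C(1,2) by (rule locally_constant_on_patch)
  moreover have "openin Z (?T' w) \<and> \<phi> w \<inter> ?T' w \<noteq> {}" if "w \<in> topspace Y" for w
  proof (cases "w \<in> C")
    case True
    then show ?thesis
      using G(1) CN[OF True] by simp
  next
    case False
    then show ?thesis
      using T that unfolding admissible_constraint_def by simp
  qed
  moreover have "?T' v \<subseteq> T v" for v
  proof (cases "v \<in> C")
    case True
    then show ?thesis
      using CN[OF True] unfolding G_def by simp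
  qed simp
  moreover have "C \<inter> F = {}"
    using CN by blast
  moreover have "G \<subseteq> B"
    unfolding G_def by blast
  ultimately show ?thesis
    using C(1,3) G(2) unfolding admissible_constraint_def
    by (intro exI[of _ ?T'] conjI exI[of _ C]) auto
qed

lemma selection_step:
  fixes Y :: "nat topology"
  assumes Y0: "Y dim_le 0" and t1: "t1_space Y" and lsc: "lower_semicontinuous_map Y Z \<phi>"
    and T: "admissible_constraint Y Z \<phi> T" and x: "\<forall>j\<in>topspace Y. j < n \<longrightarrow> x j \<in> \<phi> j \<inter> T j"
    and "k \<le> n" and B: "\<forall>z\<in>topspace Z. openin Z (B z) \<and> z \<in> B z"
  shows "\<exists>T' x'. admissible_constraint Y Z \<phi> T' \<and> (\<forall>j\<in>topspace Y. j \<le> n \<longrightarrow> x' j \<in> \<phi> j \<inter> T' j) \<and>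
    (\<forall>v\<in>topspace Y. T' v \<subseteq> T v) \<and> (\<forall>j<n. x' j = x j) \<and>
    (k \<in> topspace Y \<longrightarrow> (\<exists>C. openin Y C \<and> k \<in> C \<and> (\<forall>j\<in>C. j \<le> n \<longrightarrow> j = k) \<and> (\<forall>v\<in>C. T' v \<subseteq> B (x' k))))"
proof -
  obtain p where p: "n \<in> topspace Y \<Longrightarrow> p \<in> \<phi> n \<inter> T n"
    using T unfolding admissible_constraint_def by blast
  define x' where "x' = x(n := p)"
  have x': "x' j \<in> \<phi> j \<inter> T j" if j: "j \<in> topspace Y" "j \<le> n" for j
  proof (cases "j = n")
    case True
    then show ?thesis
      using p j(1) by (simp add: x'_def)
  next
    case False
    then have "j < n"
      using j(2) by simp
    then show ?thesis
      using x j(1) False by (simp add: x'_def)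
  qed
  have x'_eq: "\<forall>j<n. x' j = x j"
    unfolding x'_def by simp
  show ?thesis
  proof (cases "k \<in> topspace Y")
    case False
    then show ?thesis
      using T x' x'_eq by (intro exI[of _ T] exI[of _ x']) auto
  next
    case True
    have xk: "x' k \<in> \<phi> k \<inter> T k"
      using x' True \<open>k \<le> n\<close> by blast
    then have "x' k \<in> topspace Z"
      using T True openin_subset unfolding admissible_constraint_def by blast
    then have Bx: "openin Z (B (x' k))" "x' k \<in> B (x' k)"
      using B by blast+
    have F: "finite {j. j \<le> n \<and> j \<noteq> k}" "k \<notin> {j. j \<le> n \<and> j \<noteq> k}"
      by (auto intro: finite_subset[of _ "{..n}"])
    obtain T' C where T': "admissible_constraint Y Z \<phi> T'" "\<forall>v\<in>topspace Y. T' v \<subseteq> T v"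
        "x' k \<in> T' k" "\<forall>v\<in>{j. j \<le> n \<and> j \<noteq> k}. T' v = T v"
      and C: "openin Y C" "k \<in> C" "C \<inter> {j. j \<le> n \<and> j \<noteq> k} = {}" "\<forall>v\<in>C. T' v \<subseteq> B (x' k)"
      using admissible_constraint_refine[OF Y0 t1 lsc T True F xk Bx] by (elim exE conjE)
    have "x' j \<in> \<phi> j \<inter> T' j" if "j \<in> topspace Y" "j \<le> n" for j
      using x'[OF that] xk T'(3,4) that(2) by (cases "j = k") auto
    moreover have "\<exists>C. openin Y C \<and> k \<in> C \<and> (\<forall>j\<in>C. j \<le> n \<longrightarrow> j = k) \<and> (\<forall>v\<in>C. T' v \<subseteq> B (x' k))"
      using C by blast
    ultimately show ?thesis
      using T'(1,2) x'_eq by (intro exI[of _ T'] exI[of _ x']) blast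
  qed
qed

lemma continuous_map_shrinking_constraints:
  fixes Y :: "nat topology" and T :: "nat \<Rightarrow> nat \<Rightarrow> 'z set"
  assumes shrink: "\<And>s v. v \<in> topspace Y \<Longrightarrow> T (Suc s) v \<subseteq> T s v"
    and f: "\<And>j. j \<in> topspace Y \<Longrightarrow> f j \<in> topspace Z \<and> f j \<in> T (Suc j) j"
    and local: "\<And>k U. k \<in> topspace Y \<Longrightarrow> openin Z U \<Longrightarrow> f k \<in> U \<Longrightarrow>
      \<exists>s C. openin Y C \<and> k \<in> C \<and> (\<forall>j\<in>C. j \<le> s \<longrightarrow> j = k) \<and> (\<forall>v\<in>C. T (Suc s) v \<subseteq> U)"
  shows "continuous_map Y Z f"
  unfolding continuous_map_def
proof (intro conjI allI impI)
  show "f \<in> topspace Y \<rightarrow> topspace Z"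
    using f by blast
  fix U assume U: "openin Z U"
  show "openin Y {y \<in> topspace Y. f y \<in> U}"
  proof (subst openin_subopen, intro ballI)
    fix k assume "k \<in> {y \<in> topspace Y. f y \<in> U}"
    then have k: "k \<in> topspace Y" "f k \<in> U"
      by auto
    obtain s C where C: "openin Y C" "k \<in> C" "\<forall>j\<in>C. j \<le> s \<longrightarrow> j = k" "\<forall>v\<in>C. T (Suc s) v \<subseteq> U"
      using local[OF k(1) U k(2)] by (elim exE conjE)
    have "f j \<in> U" if j: "j \<in> C" for j
    proof (cases "j \<le> s")
      case True
      then show ?thesis
        using C(3) j k by auto
    next
      case False
      have jY: "j \<in> topspace Y"
        using C(1) j openin_subset by blast
      then have "f j \<in> T (Suc j) j"
        using f by blast
      also have "\<dots> \<subseteq> T (Suc s) j"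
        using lift_Suc_antimono_le[of "\<lambda>s. T s j", OF shrink[OF jY]] False by simp
      also have "\<dots> \<subseteq> U"
        using C(4) j by blast
      finally show ?thesis .
    qed
    then show "\<exists>N. openin Y N \<and> k \<in> N \<and> N \<subseteq> {y \<in> topspace Y. f y \<in> U}"
      using C(1,2) openin_subset[OF C(1)] by (intro exI[of _ C]) blast
  qed
qed

text \<open>Stage n = prod_encode (k, i) confines the constraints on a clopen neighbourhood of k
  containing no other point j \<le> n to the i-th basic neighbourhood of the value chosen at k;
  the value at the point n itself is chosen at stage n.\<close>
lemma admissible_constraint_sequence:
  fixes Y :: "nat topology" and B :: "'z \<Rightarrow> nat \<Rightarrow> 'z set"
  assumes Y0: "Y dim_le 0" and t1: "t1_space Y" and lsc: "lower_semicontinuous_map Y Z \<phi>"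
    and phi_values: "\<forall>y\<in>topspace Y. \<phi> y \<noteq> {} \<and> \<phi> y \<subseteq> topspace Z"
    and B: "\<forall>z\<in>topspace Z. \<forall>i. openin Z (B z i) \<and> z \<in> B z i"
  shows "\<exists>T x. (\<forall>n. \<forall>j\<in>topspace Y. j < n \<longrightarrow> x n j \<in> \<phi> j \<inter> T n j) \<and>
    (\<forall>n. \<forall>v\<in>topspace Y. T (Suc n) v \<subseteq> T n v) \<and> (\<forall>n j. j < n \<longrightarrow> x (Suc n) j = x n j) \<and>
    (\<forall>n. fst (prod_decode n) \<in> topspace Y \<longrightarrow> (\<exists>C. openin Y C \<and> fst (prod_decode n) \<in> C \<and>
        (\<forall>j\<in>C. j \<le> n \<longrightarrow> j = fst (prod_decode n)) \<and>
        (\<forall>v\<in>C. T (Suc n) v \<subseteq> B (x (Suc n) (fst (prod_decode n))) (snd (prod_decode n)))))"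
proof -
  define P where "P n s \<longleftrightarrow> admissible_constraint Y Z \<phi> (fst s) \<and>
      (\<forall>j\<in>topspace Y. j < n \<longrightarrow> snd s j \<in> \<phi> j \<inter> fst s j)"
    for n and s :: "(nat \<Rightarrow> 'z set) \<times> (nat \<Rightarrow> 'z)"
  define Q where "Q n s s' \<longleftrightarrow> (\<forall>v\<in>topspace Y. fst s' v \<subseteq> fst s v) \<and> (\<forall>j<n. snd s' j = snd s j) \<and>
      (fst (prod_decode n) \<in> topspace Y \<longrightarrow> (\<exists>C. openin Y C \<and> fst (prod_decode n) \<in> C \<and>
        (\<forall>j\<in>C. j \<le> n \<longrightarrow> j = fst (prod_decode n)) \<and>
        (\<forall>v\<in>C. fst s' v \<subseteq> B (snd s' (fst (prod_decode n))) (snd (prod_decode n)))))"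
    for n and s s' :: "(nat \<Rightarrow> 'z set) \<times> (nat \<Rightarrow> 'z)"
  have "P 0 (\<lambda>_. topspace Z, undefined)"
    using phi_values unfolding P_def admissible_constraint_def locally_constant_on_def by (auto simp: Int_absorb2)
  moreover have "\<exists>s'. P (Suc n) s' \<and> Q n s s'" if "P n s" for n s
  proof -
    have s: "admissible_constraint Y Z \<phi> (fst s)" "\<forall>j\<in>topspace Y. j < n \<longrightarrow> snd s j \<in> \<phi> j \<inter> fst s j"
      using that unfolding P_def by blast+
    have k: "fst (prod_decode n) \<le> n"
      by (metis le_prod_encode_1 prod.collapse prod_decode_inverse)
    have nbhd: "\<forall>z\<in>topspace Z. openin Z (B z (snd (prod_decode n))) \<and> z \<in> B z (snd (prod_decode n))"
      using B by blast
    obtain T' x' where "admissible_constraint Y Z \<phi> T'"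
      "\<forall>j\<in>topspace Y. j \<le> n \<longrightarrow> x' j \<in> \<phi> j \<inter> T' j" "\<forall>v\<in>topspace Y. T' v \<subseteq> fst s v"
      "\<forall>j<n. x' j = snd s j"
      "fst (prod_decode n) \<in> topspace Y \<longrightarrow> (\<exists>C. openin Y C \<and> fst (prod_decode n) \<in> C \<and>
         (\<forall>j\<in>C. j \<le> n \<longrightarrow> j = fst (prod_decode n)) \<and>
         (\<forall>v\<in>C. T' v \<subseteq> B (x' (fst (prod_decode n))) (snd (prod_decode n))))"
      using selection_step[OF Y0 t1 lsc s k nbhd] by (elim exE conjE)
    then show ?thesis
      unfolding P_def Q_def by (intro exI[of _ "(T', x')"]) auto
  qed
  ultimately obtain seq where "\<And>n. P n (seq n)" "\<And>n. Q n (seq n) (seq (Suc n))"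
    using dependent_nat_choice[of P Q] by blast
  then show ?thesis
    unfolding P_def Q_def by (intro exI[of _ "\<lambda>n. fst (seq n)"] exI[of _ "\<lambda>n. snd (seq n)"]) simp
qed

theorem countable_zero_dimensional_selection:
  fixes Y :: "nat topology" and Z :: "'z topology"
  assumes Y0: "Y dim_le 0" and t1: "t1_space Y" and Z: "first_countable Z"
    and phi_values: "\<And>y. y \<in> topspace Y \<Longrightarrow> \<phi> y \<noteq> {} \<and> \<phi> y \<subseteq> topspace Z"
    and lsc: "lower_semicontinuous_map Y Z \<phi>"
  shows "\<exists>f. continuous_map Y Z f \<and> (\<forall>y\<in>topspace Y. f y \<in> \<phi> y)"
proof -
  have "\<forall>z\<in>topspace Z. \<exists>b. (\<forall>i::nat. openin Z (b i) \<and> z \<in> b i) \<and> (\<forall>U. openin Z U \<and> z \<in> U \<longrightarrow> (\<exists>i. b i \<subseteq> U))"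
    using first_countable_nat_nbhd_base[OF Z] by blast
  then obtain B where B: "\<forall>z\<in>topspace Z. (\<forall>i::nat. openin Z (B z i) \<and> z \<in> B z i) \<and>
      (\<forall>U. openin Z U \<and> z \<in> U \<longrightarrow> (\<exists>i. B z i \<subseteq> U))"
    by (rule bchoice[THEN exE])
  then have B_open: "\<forall>z\<in>topspace Z. \<forall>i. openin Z (B z i) \<and> z \<in> B z i"
    by blast
  have phi_all: "\<forall>y\<in>topspace Y. \<phi> y \<noteq> {} \<and> \<phi> y \<subseteq> topspace Z"
    using phi_values by blast
  obtain T x where x: "\<forall>n. \<forall>j\<in>topspace Y. j < n \<longrightarrow> x n j \<in> \<phi> j \<inter> T n j"
    and shrink: "\<forall>n. \<forall>v\<in>topspace Y. T (Suc n) v \<subseteq> T n v" and stable: "\<forall>n j. j < n \<longrightarrow> x (Suc n) j = x n j"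
    and local: "\<forall>n. fst (prod_decode n) \<in> topspace Y \<longrightarrow> (\<exists>C. openin Y C \<and> fst (prod_decode n) \<in> C \<and>
        (\<forall>j\<in>C. j \<le> n \<longrightarrow> j = fst (prod_decode n)) \<and>
        (\<forall>v\<in>C. T (Suc n) v \<subseteq> B (x (Suc n) (fst (prod_decode n))) (snd (prod_decode n))))"
    using admissible_constraint_sequence[OF Y0 t1 lsc phi_all B_open] by (elim exE conjE)
  define f where "f j = x (Suc j) j" for j
  have x_f: "x n j = f j" if "Suc j \<le> n" for n j
    using that
  proof (induction n rule: dec_induct)
    case base
    then show ?case
      by (simp add: f_def)
  next
    case (step m)
    then show ?case
      using stable by simp
  qed
  have f: "f j \<in> \<phi> j \<inter> T (Suc j) j" if "j \<in> topspace Y" for j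
    using x that unfolding f_def by simp
  have "continuous_map Y Z f"
  proof (rule continuous_map_shrinking_constraints[of Y T])
    show "T (Suc s) v \<subseteq> T s v" if "v \<in> topspace Y" for s v
      using shrink that by blast
    show "f j \<in> topspace Z \<and> f j \<in> T (Suc j) j" if "j \<in> topspace Y" for j
      using f phi_values that by blast
    fix k U assume k: "k \<in> topspace Y" and U: "openin Z U" "f k \<in> U"
    have "f k \<in> topspace Z"
      using f[OF k] phi_values[OF k] by blast
    then obtain i where i: "B (f k) i \<subseteq> U"
      using B U by blast
    define s where "s = prod_encode (k, i)"
    have "prod_decode s = (k, i)" "x (Suc s) k = f k"
      using x_f le_prod_encode_1[of k i] unfolding s_def by simp_all
    then have "\<exists>C. openin Y C \<and> k \<in> C \<and> (\<forall>j\<in>C. j \<le> s \<longrightarrow> j = k) \<and> (\<forall>v\<in>C. T (Suc s) v \<subseteq> B (f k) i)"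
      using local[rule_format, of s] k by simp
    then obtain C where "openin Y C" "k \<in> C" "\<forall>j\<in>C. j \<le> s \<longrightarrow> j = k" "\<forall>v\<in>C. T (Suc s) v \<subseteq> B (f k) i"
      by (elim exE conjE)
    then show "\<exists>s C. openin Y C \<and> k \<in> C \<and> (\<forall>j\<in>C. j \<le> s \<longrightarrow> j = k) \<and> (\<forall>v\<in>C. T (Suc s) v \<subseteq> U)"
      using i by (intro exI[of _ s] exI[of _ C]) blast
  qed
  then show ?thesis
    using f by blast
qed

theorem mainTheorem15:
  fixes X :: "'a::linorder topology" and E :: "'b topology"
  assumes "GO_space X"
    and "metrizable_space E" and "countable (topspace E)"
  shows "C_selective (prod_topology E X)"
  unfolding C_selective_def Y_selective_def
proof (intro allI impI)
  fix Y :: "nat topology" and \<phi> :: "nat \<Rightarrow> ('b \<times> 'a) set"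
  assume Y: "countable (topspace Y) \<and> regular_space Y \<and> t1_space Y"
    and \<phi>: "lsc_closed_valued Y (prod_topology E X) \<phi>"
  let ?Z = "prod_topology E (cof_refinement X)"
  have closed: "\<And>y. y \<in> topspace Y \<Longrightarrow> \<phi> y \<noteq> {} \<and> closedin (prod_topology E X) (\<phi> y)"
    and "lower_semicontinuous_map Y (prod_topology E X) \<phi>"
    using \<phi> unfolding lsc_closed_valued_def lower_semicontinuous_map_def by blast+
  then have "lower_semicontinuous_map Y ?Z \<phi>"
    using lower_semicontinuous_map_cof_refinement assms(1,3) Y by blast
  moreover have "first_countable ?Z"
    using first_countable_prod_topology metrizable_imp_first_countable first_countable_cof_refinement assms(1,2)
    by blast
  moreover have "\<phi> y \<noteq> {} \<and> \<phi> y \<subseteq> topspace ?Z" if "y \<in> topspace Y" for y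
    using closed[OF that] closedin_subset by fastforce
  ultimately obtain f where "continuous_map Y ?Z f" "\<forall>y\<in>topspace Y. f y \<in> \<phi> y"
    using countable_zero_dimensional_selection countable_regular_imp_dim_le_0 Y by metis
  then show "\<exists>f. continuous_map Y (prod_topology E X) f \<and> (\<forall>y\<in>topspace Y. f y \<in> \<phi> y)"
    using continuous_map_prod_cof_refinement by blast
qed

end
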